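(* Let $d\ge3$, let $V$ be a $d\times d$ correlation matrix (symmetric positive semi-definite with unit diagonal), let $X=(X_1,\dots,X_d)\sim N(0,V)$, and let $h(x)=\max_{1\le i\le d}x_i$. Then $E(h(X)^2)\le 6\ln d$ and $\mathrm{Var}(h(X))\ge d^{-15}/\sqrt{2\pi}$. *)

theory Defs
  imports "HOL-Probability.Probability"
begin

definition correlation_matrix :: "nat \<Rightarrow> (nat \<Rightarrow> nat \<Rightarrow> real) \<Rightarrow> bool" where
  "correlation_matrix d V \<longleftrightarrow>
     (\<forall>i<d. \<forall>j<d. V i j = V j i) \<and>
     (\<forall>t::nat \<Rightarrow> real. 0 \<le> (\<Sum>i<d. \<Sum>j<d. t i * V i j * t j)) \<and>
     (\<forall>i<d. V i i = 1)"

definition centered_normal :: "real \<Rightarrow> real measure" where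
  "centered_normal s = (if s = 0 then return borel 0
                        else density lborel (normal_density 0 (sqrt s)))"

text \<open>X = (X_0,...,X_{d-1}) on M is N(0,V): every component is a real random
  variable, and every linear combination t.X is N(0, t^T V t)
  (standard definition of a possibly degenerate Gaussian vector).\<close>
definition gaussian_vector ::
  "'a measure \<Rightarrow> nat \<Rightarrow> (nat \<Rightarrow> nat \<Rightarrow> real) \<Rightarrow> (nat \<Rightarrow> 'a \<Rightarrow> real) \<Rightarrow> bool" where
  "gaussian_vector M d V X \<longleftrightarrow>
     (\<forall>i<d. X i \<in> borel_measurable M) \<and>
     (\<forall>t::nat \<Rightarrow> real.
        distr M borel (\<lambda>\<omega>. \<Sum>i<d. t i * X i \<omega>)
          = centered_normal (\<Sum>i<d. \<Sum>j<d. t i * V i j * t j))"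

end

theory Submission
  imports Defs
begin

(* Write Y for the maximum of the X i. Each X i is standard normal, so E exp((X i)^2/4) = sqrt 2,
  and since exp(Y^2/4) is one of the summands of the sum over i of exp((X i)^2/4), we get
  E exp(Y^2/4) <= d sqrt 2. Jensen's inequality then gives E Y^2 <= 4 ln (d sqrt 2) <= 6 ln d,
  and Markov's inequality gives P(Y <= a) >= 1/2 for a = 2 sqrt (ln (3 d)).
  On the other hand P(Y >= a + 1) >= P(X 0 \<in> [a + 1, a + 2]) >= phi(a + 2), phi the standard
  normal density. The events {Y <= a} and {Y >= a + 1} are at distance 1, so one of them stays
  at distance >= 1/2 from E Y; hence Var Y >= phi(a + 2) / 4 >= d^-15 / sqrt (2 pi).
  Only the marginal laws of the X i enter, never their joint law. *)

lemma gaussian_vector_component_measurable: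
  "gaussian_vector M d V X \<Longrightarrow> i < d \<Longrightarrow> X i \<in> borel_measurable M"
  unfolding gaussian_vector_def by blast

lemma gaussian_vector_component_distr:
  assumes "gaussian_vector M d V X" "i < d"
  shows "distr M borel (X i) = centered_normal (V i i)"
proof -
  define t where "t = (\<lambda>k::nat. if k = i then 1 else (0::real))"
  have X_i: "(\<lambda>\<omega>. \<Sum>k<d. t k * X k \<omega>) = X i"
    using assms(2) by (simp add: t_def fun_eq_iff if_distrib[of "\<lambda>c. c * _"] cong: if_cong)
  have V_ii: "(\<Sum>k<d. \<Sum>j<d. t k * V k j * t j) = V i i"
  proof -
    have "t k * V k j * t j = (if j = i then if k = i then V i i else 0 else 0)" for k j
      by (simp add: t_def)
    then show ?thesis using assms(2) by (simp add: sum.delta')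
  qed
  from assms(1) have "distr M borel (\<lambda>\<omega>. \<Sum>k<d. t k * X k \<omega>)
      = centered_normal (\<Sum>k<d. \<Sum>j<d. t k * V k j * t j)"
    unfolding gaussian_vector_def by blast
  then show ?thesis unfolding X_i V_ii .
qed

lemma centered_normal_1: "centered_normal 1 = density lborel std_normal_density"
  by (simp add: centered_normal_def)

lemma std_normal_density_le_half: "std_normal_density x \<le> 1 / 2"
proof -
  have "std_normal_density x \<le> 1 / sqrt (2 * pi)"
    unfolding std_normal_density_def by (simp add: divide_right_mono)
  also have "\<dots> \<le> 1 / 2"
    using pi_gt3 by (simp add: divide_simps real_le_rsqrt)
  finally show ?thesis .
qed

lemma std_normal_density_mult_exp_square_quarter:
  "std_normal_density x * exp (x\<^sup>2 / 4) = sqrt 2 * normal_density 0 (sqrt 2) x"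
proof -
  have "exp (- x\<^sup>2 / 2) * exp (x\<^sup>2 / 4) = exp (- x\<^sup>2 / 4)"
    by (simp add: exp_add[symmetric])
  moreover have "sqrt 2 * (1 / sqrt (2 * pi * 2)) = 1 / sqrt (2 * pi)"
    by (simp add: real_sqrt_mult field_simps)
  ultimately show ?thesis
    unfolding normal_density_def by (simp add: field_simps)
qed

lemma std_normal_interval_measure_ge:
  assumes "0 \<le> u"
  shows "std_normal_density (u + 1) \<le> measure (density lborel std_normal_density) {u..u+1}"
proof -
  interpret N: prob_space "density lborel std_normal_density"
    by (rule prob_space_normal_density) simp
  have decreasing: "std_normal_density (u + 1) \<le> std_normal_density x" if "x \<in> {u..u+1}" for x
  proof -
    have "x\<^sup>2 \<le> (u + 1)\<^sup>2" using that assms by (intro power_mono) auto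
    then show ?thesis unfolding std_normal_density_def by (simp add: divide_right_mono)
  qed
  have "ennreal (std_normal_density (u + 1))
      = (\<integral>\<^sup>+x. ennreal (std_normal_density (u + 1)) * indicator {u..u+1} x \<partial>lborel)"
    by (subst nn_integral_cmult_indicator) auto
  also have "\<dots> \<le> (\<integral>\<^sup>+x. ennreal (std_normal_density x) * indicator {u..u+1} x \<partial>lborel)"
    by (intro nn_integral_mono) (auto simp: indicator_def decreasing)
  also have "\<dots> = ennreal (measure (density lborel std_normal_density) {u..u+1})"
    by (simp add: emeasure_density N.emeasure_eq_measure[symmetric])
  finally show ?thesis by (simp add: ennreal_le_iff)
qed

lemma exp_le_std_normal_density_two_sqrt_ln_plus_two:
  assumes "1 \<le> x"
  shows "exp (- 4) / x ^ 4 / sqrt (2 * pi) \<le> std_normal_density (2 * sqrt (ln x) + 2)"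
proof -
  define L where "L = ln x"
  have "0 \<le> L" using assms by (simp add: L_def)
  then have "(2 * sqrt L + 2)\<^sup>2 = 4 * L + 8 * sqrt L + 4"
    by (simp add: power2_sum power_mult_distrib)
  also have "\<dots> \<le> 8 * L + 8"
  proof -
    have "0 \<le> (sqrt L - 1)\<^sup>2" by simp
    then show ?thesis using \<open>0 \<le> L\<close> by (simp add: power2_diff)
  qed
  finally have "exp (- (4 * L + 4)) \<le> exp (- (2 * sqrt L + 2)\<^sup>2 / 2)"
    by simp
  moreover have "exp (- (4 * L + 4)) = exp (- 4) / exp (4 * L)"
    by (subst exp_diff[symmetric]) (simp add: algebra_simps)
  moreover have "exp (4 * L) = x ^ 4"
    using assms exp_of_nat_mult[of 4 L] by (simp add: L_def)
  ultimately have "exp (- 4) / x ^ 4 \<le> exp (- (2 * sqrt L + 2)\<^sup>2 / 2)"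
    by (simp only:)
  then have "exp (- 4) / x ^ 4 / sqrt (2 * pi) \<le> exp (- (2 * sqrt L + 2)\<^sup>2 / 2) / sqrt (2 * pi)"
    by (rule divide_right_mono) simp
  then show ?thesis
    unfolding std_normal_density_def L_def by simp
qed

lemma powr_minus_15_le:
  fixes q :: real
  assumes "3 \<le> q"
  shows "q powr (- 15) \<le> exp (- 4) / (3 * q) ^ 4 / 4"
proof -
  have "exp (4 :: real) = exp 1 ^ 4"
    by (simp flip: exp_of_nat_mult)
  also have "\<dots> \<le> 3 ^ 4"
    using exp_le by (intro power_mono) auto
  finally have "4 * 81 * exp 4 * q ^ 4 \<le> 3 ^ 11 * q ^ 4"
    by (simp add: mult_right_mono)
  also have "\<dots> \<le> q ^ 11 * q ^ 4"
    using assms by (intro mult_right_mono power_mono) auto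
  finally have "4 * (3 * q) ^ 4 \<le> exp (- 4) * q ^ 15"
    by (simp add: exp_minus field_simps power_mult_distrib flip: power_add)
  then show ?thesis
    using assms by (simp add: powr_minus powr_realpow field_simps)
qed

lemma powr_minus_15_le_std_normal_density:
  fixes q :: real
  assumes "3 \<le> q"
  shows "q powr (- 15) / sqrt (2 * pi) \<le> std_normal_density (2 * sqrt (ln (3 * q)) + 2) / 4"
proof -
  have "q powr (- 15) / sqrt (2 * pi) \<le> exp (- 4) / (3 * q) ^ 4 / 4 / sqrt (2 * pi)"
    by (rule divide_right_mono[OF powr_minus_15_le[OF assms]]) simp
  also have "\<dots> = exp (- 4) / (3 * q) ^ 4 / sqrt (2 * pi) / 4"
    by simp
  also have "\<dots> \<le> std_normal_density (2 * sqrt (ln (3 * q)) + 2) / 4"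
  proof (rule divide_right_mono)
    show "exp (- 4) / (3 * q) ^ 4 / sqrt (2 * pi) \<le> std_normal_density (2 * sqrt (ln (3 * q)) + 2)"
      using assms by (intro exp_le_std_normal_density_two_sqrt_ln_plus_two) simp
  qed simp
  finally show ?thesis .
qed

lemma (in prob_space) has_bochner_integral_exp_square_quarter_std_normal:
  assumes [measurable]: "Z \<in> borel_measurable M"
    and distr_Z: "distr M borel Z = density lborel std_normal_density"
  shows "has_bochner_integral M (\<lambda>\<omega>. exp ((Z \<omega>)\<^sup>2 / 4)) (sqrt 2)"
proof -
  have "has_bochner_integral lborel (\<lambda>x. std_normal_density x * exp (x\<^sup>2 / 4)) (sqrt 2)"
    unfolding std_normal_density_mult_exp_square_quarter
    by (simp add: has_bochner_integral_iff)
  then have "has_bochner_integral (distr M borel Z) (\<lambda>x. exp (x\<^sup>2 / 4)) (sqrt 2)"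
    unfolding distr_Z by (intro has_bochner_integral_density) auto
  then show ?thesis
    by (simp add: has_bochner_integral_iff integrable_distr_eq integral_distr)
qed

lemma (in prob_space) variance_ge_separated_events:
  assumes [measurable]: "Y \<in> borel_measurable M"
    and Y_square: "integrable M (\<lambda>\<omega>. (Y \<omega>)\<^sup>2)"
    and "0 \<le> g"
  shows "g\<^sup>2 / 4 * min (prob {\<omega>\<in>space M. Y \<omega> \<le> a}) (prob {\<omega>\<in>space M. a + g \<le> Y \<omega>})
    \<le> variance Y"
proof -
  define c where "c = expectation Y"
  have integrable_variance: "integrable M (\<lambda>\<omega>. (Y \<omega> - c)\<^sup>2)"
  proof (rule Bochner_Integration.integrable_bound)
    show "integrable M (\<lambda>\<omega>. 2 * (Y \<omega>)\<^sup>2 + 2 * c\<^sup>2)"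
      using Y_square by auto
    have "(Y \<omega> - c)\<^sup>2 \<le> 2 * (Y \<omega>)\<^sup>2 + 2 * c\<^sup>2" for \<omega>
      using sum_squares_ge_zero[of "Y \<omega> + c" 0] by (simp add: power2_eq_square algebra_simps)
    then show "AE \<omega> in M. norm ((Y \<omega> - c)\<^sup>2) \<le> norm (2 * (Y \<omega>)\<^sup>2 + 2 * c\<^sup>2)"
      by simp
  qed simp
  have far_from_mean: "g\<^sup>2 / 4 * prob S \<le> variance Y"
    if S [measurable]: "S \<in> events" and far: "\<And>\<omega>. \<omega> \<in> S \<Longrightarrow> g / 2 \<le> \<bar>Y \<omega> - c\<bar>" for S
  proof -
    have "g\<^sup>2 / 4 * indicator S \<omega> \<le> (Y \<omega> - c)\<^sup>2" for \<omega>
    proof (cases "\<omega> \<in> S")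
      case True
      have "(g / 2)\<^sup>2 \<le> \<bar>Y \<omega> - c\<bar>\<^sup>2"
        using far[OF True] \<open>0 \<le> g\<close> by (intro power_mono) auto
      then show ?thesis using True by (simp add: power_divide)
    qed simp
    then have "expectation (\<lambda>\<omega>. g\<^sup>2 / 4 * indicator S \<omega>) \<le> variance Y"
      unfolding c_def[symmetric]
      by (intro integral_mono integrable_variance integrable_mult_right integrable_real_indicator)
        (auto simp: emeasure_eq_measure)
    then show ?thesis by simp
  qed
  show ?thesis
  proof (cases "c \<le> a + g / 2")
    case True
    then have "g\<^sup>2 / 4 * prob {\<omega>\<in>space M. a + g \<le> Y \<omega>} \<le> variance Y"
      by (intro far_from_mean) (auto simp: abs_if)
    then show ?thesis
      by (smt (verit) mult_left_mono min.cobounded2 zero_le_power2 divide_nonneg_nonneg)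
  next
    case False
    then have "g\<^sup>2 / 4 * prob {\<omega>\<in>space M. Y \<omega> \<le> a} \<le> variance Y"
      by (intro far_from_mean) (auto simp: abs_if)
    then show ?thesis
      by (smt (verit) mult_left_mono min.cobounded1 zero_le_power2 divide_nonneg_nonneg)
  qed
qed

locale std_normal_family = prob_space +
  fixes d :: nat and X :: "nat \<Rightarrow> 'a \<Rightarrow> real"
  assumes nonempty: "0 < d"
    and measurable_component[measurable]: "i < d \<Longrightarrow> X i \<in> borel_measurable M"
    and distr_component: "i < d \<Longrightarrow> distr M borel (X i) = density lborel std_normal_density"
begin

definition X_max :: "'a \<Rightarrow> real" where
  "X_max \<omega> = Max ((\<lambda>i. X i \<omega>) ` {..<d})"

lemma X_max_measurable[measurable]: "X_max \<in> borel_measurable M"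
  unfolding X_max_def by (rule borel_measurable_Max) auto

lemma component_le_X_max: "i < d \<Longrightarrow> X i \<omega> \<le> X_max \<omega>"
  unfolding X_max_def by (intro Max_ge) auto

lemma X_max_attained: "\<exists>i<d. X_max \<omega> = X i \<omega>"
proof -
  have "X_max \<omega> \<in> (\<lambda>i. X i \<omega>) ` {..<d}"
    unfolding X_max_def using nonempty by (intro Max_in) auto
  then show ?thesis by auto
qed

lemma exp_square_quarter_X_max_le_sum:
  "exp ((X_max \<omega>)\<^sup>2 / 4) \<le> (\<Sum>i<d. exp ((X i \<omega>)\<^sup>2 / 4))"
proof -
  obtain i where "i < d" "X_max \<omega> = X i \<omega>"
    using X_max_attained by blast
  then show ?thesis by (auto intro: member_le_sum)
qed

lemma has_bochner_integral_sum_exp_square_quarter: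
  "has_bochner_integral M (\<lambda>\<omega>. \<Sum>i<d. exp ((X i \<omega>)\<^sup>2 / 4)) (real d * sqrt 2)"
proof -
  have "has_bochner_integral M (\<lambda>\<omega>. \<Sum>i<d. exp ((X i \<omega>)\<^sup>2 / 4)) (\<Sum>i<d. sqrt 2)"
    by (intro has_bochner_integral_sum has_bochner_integral_exp_square_quarter_std_normal
        measurable_component distr_component) auto
  then show ?thesis by simp
qed

lemma integrable_exp_square_quarter_X_max: "integrable M (\<lambda>\<omega>. exp ((X_max \<omega>)\<^sup>2 / 4))"
proof (rule Bochner_Integration.integrable_bound)
  show "integrable M (\<lambda>\<omega>. \<Sum>i<d. exp ((X i \<omega>)\<^sup>2 / 4))"
    using has_bochner_integral_sum_exp_square_quarter by (rule integrable.intros)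
  show "AE \<omega> in M. norm (exp ((X_max \<omega>)\<^sup>2 / 4)) \<le> norm (\<Sum>i<d. exp ((X i \<omega>)\<^sup>2 / 4))"
    using exp_square_quarter_X_max_le_sum by (simp add: sum_nonneg)
qed simp

lemma expectation_exp_square_quarter_X_max_le:
  "expectation (\<lambda>\<omega>. exp ((X_max \<omega>)\<^sup>2 / 4)) \<le> real d * sqrt 2"
proof -
  note sum = has_bochner_integral_sum_exp_square_quarter
  have "expectation (\<lambda>\<omega>. exp ((X_max \<omega>)\<^sup>2 / 4))
      \<le> expectation (\<lambda>\<omega>. \<Sum>i<d. exp ((X i \<omega>)\<^sup>2 / 4))"
    using integrable.intros[OF sum]
    by (intro integral_mono integrable_exp_square_quarter_X_max exp_square_quarter_X_max_le_sum)
  also have "\<dots> = real d * sqrt 2"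
    using has_bochner_integral_integral_eq[OF sum] .
  finally show ?thesis .
qed

lemma integrable_square_X_max: "integrable M (\<lambda>\<omega>. (X_max \<omega>)\<^sup>2)"
proof (rule Bochner_Integration.integrable_bound)
  show "integrable M (\<lambda>\<omega>. 4 * exp ((X_max \<omega>)\<^sup>2 / 4))"
    using integrable_exp_square_quarter_X_max by simp
  have "(X_max \<omega>)\<^sup>2 \<le> 4 * exp ((X_max \<omega>)\<^sup>2 / 4)" for \<omega>
    using exp_ge_add_one_self[of "(X_max \<omega>)\<^sup>2 / 4"] by linarith
  then show "AE \<omega> in M. norm ((X_max \<omega>)\<^sup>2) \<le> norm (4 * exp ((X_max \<omega>)\<^sup>2 / 4))"
    by simp
qed simp

lemma expectation_square_X_max_le:
  "expectation (\<lambda>\<omega>. (X_max \<omega>)\<^sup>2) \<le> 4 * ln (real d * sqrt 2)"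
proof -
  have "exp (expectation (\<lambda>\<omega>. (X_max \<omega>)\<^sup>2 / 4)) \<le> expectation (\<lambda>\<omega>. exp ((X_max \<omega>)\<^sup>2 / 4))"
    using integrable_square_X_max integrable_exp_square_quarter_X_max
    by (intro jensens_inequality[where I = UNIV] exp_convex) auto
  also have "\<dots> \<le> real d * sqrt 2"
    by (rule expectation_exp_square_quarter_X_max_le)
  finally have "expectation (\<lambda>\<omega>. (X_max \<omega>)\<^sup>2) / 4 \<le> ln (real d * sqrt 2)"
    using nonempty by (subst ln_ge_iff) auto
  then show ?thesis by simp
qed

lemma prob_X_max_gt_le:
  assumes "0 \<le> a"
  shows "prob {\<omega>\<in>space M. a < X_max \<omega>} \<le> real d * sqrt 2 / exp (a\<^sup>2 / 4)"
proof -
  have "{\<omega>\<in>space M. a < X_max \<omega>} \<subseteq> {\<omega>\<in>space M. exp (a\<^sup>2 / 4) \<le> exp ((X_max \<omega>)\<^sup>2 / 4)}"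
    using assms by (auto intro: power_mono)
  then have "prob {\<omega>\<in>space M. a < X_max \<omega>}
      \<le> prob {\<omega>\<in>space M. exp (a\<^sup>2 / 4) \<le> exp ((X_max \<omega>)\<^sup>2 / 4)}"
    by (intro finite_measure_mono) auto
  also have "\<dots> \<le> expectation (\<lambda>\<omega>. exp ((X_max \<omega>)\<^sup>2 / 4)) / exp (a\<^sup>2 / 4)"
    using integrable_exp_square_quarter_X_max
    by (intro integral_Markov_inequality_measure) auto
  also have "\<dots> \<le> real d * sqrt 2 / exp (a\<^sup>2 / 4)"
    using expectation_exp_square_quarter_X_max_le by (simp add: divide_right_mono)
  finally show ?thesis .
qed

lemma prob_X_max_le_ge_half: "1 / 2 \<le> prob {\<omega>\<in>space M. X_max \<omega> \<le> 2 * sqrt (ln (3 * real d))}"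
proof -
  define a where "a = 2 * sqrt (ln (3 * real d))"
  have "0 \<le> ln (3 * real d)" using nonempty by simp
  then have "exp (a\<^sup>2 / 4) = 3 * real d"
    using nonempty by (simp add: a_def power_mult_distrib)
  then have "prob {\<omega>\<in>space M. a < X_max \<omega>} \<le> sqrt 2 / 3"
    using prob_X_max_gt_le[of a] nonempty by (simp add: a_def)
  also have "\<dots> \<le> 1 / 2"
    using real_le_lsqrt[of "3 / 2" 2] by (simp add: power2_eq_square)
  finally have "prob {\<omega>\<in>space M. a < X_max \<omega>} \<le> 1 / 2" .
  moreover have "{\<omega>\<in>space M. a < X_max \<omega>} = space M - {\<omega>\<in>space M. X_max \<omega> \<le> a}"
    by auto
  ultimately show ?thesis
    by (simp add: a_def prob_compl)
qed

lemma prob_X_max_ge_ge: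
  assumes "0 \<le> u"
  shows "std_normal_density (u + 1) \<le> prob {\<omega>\<in>space M. u \<le> X_max \<omega>}"
proof -
  have "std_normal_density (u + 1) \<le> measure (distr M borel (X 0)) {u..u+1}"
    using std_normal_interval_measure_ge[OF assms] distr_component[OF nonempty] by simp
  also have "\<dots> = prob (X 0 -` {u..u+1} \<inter> space M)"
    using nonempty by (subst measure_distr) auto
  also have "\<dots> \<le> prob {\<omega>\<in>space M. u \<le> X_max \<omega>}"
    using component_le_X_max[OF nonempty]
    by (intro finite_measure_mono) (auto intro: order_trans)
  finally show ?thesis .
qed

lemma expectation_square_X_max_le_6_ln:
  assumes "2 \<le> d"
  shows "expectation (\<lambda>\<omega>. (X_max \<omega>)\<^sup>2) \<le> 6 * ln (real d)"
proof -
  have "expectation (\<lambda>\<omega>. (X_max \<omega>)\<^sup>2) \<le> 4 * ln (real d) + 2 * ln 2"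
    using expectation_square_X_max_le nonempty by (simp add: ln_mult ln_sqrt)
  also have "\<dots> \<le> 6 * ln (real d)"
    using assms by simp
  finally show ?thesis .
qed

lemma variance_X_max_ge_powr_minus_15:
  assumes "3 \<le> d"
  shows "real d powr (-15) / sqrt (2 * pi) \<le> variance X_max"
proof -
  define a where "a = 2 * sqrt (ln (3 * real d))"
  have "0 \<le> a"
    using nonempty by (simp add: a_def)
  have "real d powr (-15) / sqrt (2 * pi) \<le> std_normal_density (a + 2) / 4"
    using powr_minus_15_le_std_normal_density[of "real d"] assms unfolding a_def by simp
  also have "\<dots> \<le> 1\<^sup>2 / 4 * min (prob {\<omega>\<in>space M. X_max \<omega> \<le> a})
      (prob {\<omega>\<in>space M. a + 1 \<le> X_max \<omega>})"
    using prob_X_max_le_ge_half prob_X_max_ge_ge[of "a + 1"] std_normal_density_le_half[of "a + 2"]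
      \<open>0 \<le> a\<close>
    unfolding a_def[symmetric] by (simp add: add.assoc)
  also have "\<dots> \<le> variance X_max"
    using integrable_square_X_max by (intro variance_ge_separated_events) auto
  finally show ?thesis .
qed

end

lemma std_normal_family_gaussian_vector:
  assumes "prob_space M" "0 < d" "correlation_matrix d V" "gaussian_vector M d V X"
  shows "std_normal_family M d X"
proof (intro std_normal_family.intro std_normal_family_axioms.intro assms(1,2))
  fix i assume "i < d"
  with assms(4) show "X i \<in> borel_measurable M"
    by (rule gaussian_vector_component_measurable)
  show "distr M borel (X i) = density lborel std_normal_density"
    using assms(3) \<open>i < d\<close> gaussian_vector_component_distr[OF assms(4)]
    by (simp add: correlation_matrix_def centered_normal_1)
qed

theorem mainTheorem16:
  fixes M :: "'a measure" and d :: nat and V :: "nat \<Rightarrow> nat \<Rightarrow> real"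
    and X :: "nat \<Rightarrow> 'a \<Rightarrow> real"
  assumes "prob_space M"
    and "d \<ge> 3"
    and "correlation_matrix d V"
    and "gaussian_vector M d V X"
  shows "prob_space.expectation M (\<lambda>\<omega>. (Max ((\<lambda>i. X i \<omega>) ` {..<d}))\<^sup>2) \<le> 6 * ln (real d) \<and>
         prob_space.variance M (\<lambda>\<omega>. Max ((\<lambda>i. X i \<omega>) ` {..<d}))
           \<ge> real d powr (-15) / sqrt (2 * pi)"
proof -
  interpret std_normal_family M d X
    using assms by (intro std_normal_family_gaussian_vector) auto
  have "(\<lambda>\<omega>. Max ((\<lambda>i. X i \<omega>) ` {..<d})) = X_max"
    by (simp add: X_max_def fun_eq_iff)
  with expectation_square_X_max_le_6_ln variance_X_max_ge_powr_minus_15 assms(2) show ?thesis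
    by (simp add: X_max_def)
qed

end
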